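(* Let $(X,\Sigma)$ be a measurable space, $p$ a transition function on it with associated operator $A$ on $ba(X,\Sigma)$, and let $K=\{\mu_1,\dots,\mu_m\}$ be a finitely additive cycle of measures of $A$. Then $K$ is countably additive (i.e. all $\mu_i$ are countably additive) if and only if its mean measure $\frac1m\sum_{k=1}^m\mu_k$ is countably additive.
   Context: $X$ is an arbitrary infinite set and $\Sigma$ a $\sigma$-algebra of subsets of $X$ containing all one-point sets. $ba(X,\Sigma)$ denotes the space of bounded finitely additive real-valued measures on $\Sigma$. A transition function is a map $p(x,E)$ with $0\le p(x,E)\le1$, $p(x,X)=1$, $p(\cdot,E)$ bounded $\Sigma$-measurable for every $E\in\Sigma$, and $p(x,\cdot)$ countably additive for every $x\in X$. The Markov operator is $A\mu(E)=\int_X p(x,E)\,\mu(dx)$. A cycle of measures of $A$ is a finite numbered set $\{\mu_1,\dots,\mu_m\}$ of pairwise different positive finitely additive measures with $A\mu_i=\mu_{i+1}$ ($1\le i\le m-1$), $A\mu_m=\mu_1$; its mean measure is $\frac1m\sum_k\mu_k$. *)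

theory Defs
  imports "HOL-Analysis.Analysis"
begin

definition standing_space :: "'a set \<Rightarrow> 'a set set \<Rightarrow> bool" where
  "standing_space X \<Sigma> \<longleftrightarrow> infinite X \<and> sigma_algebra X \<Sigma> \<and> (\<forall>x\<in>X. {x} \<in> \<Sigma>)"

text \<open>Set functions on Sigma are represented as functions on all sets, required to be 0 off Sigma.\<close>
definition fin_additive :: "'a set set \<Rightarrow> ('a set \<Rightarrow> real) \<Rightarrow> bool" where
  "fin_additive \<Sigma> \<mu> \<longleftrightarrow> (\<forall>E. E \<notin> \<Sigma> \<longrightarrow> \<mu> E = 0) \<and>
     (\<forall>A\<in>\<Sigma>. \<forall>B\<in>\<Sigma>. A \<inter> B = {} \<longrightarrow> \<mu> (A \<union> B) = \<mu> A + \<mu> B)"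

definition ba_measure :: "'a set \<Rightarrow> 'a set set \<Rightarrow> ('a set \<Rightarrow> real) \<Rightarrow> bool" where
  "ba_measure X \<Sigma> \<mu> \<longleftrightarrow> fin_additive \<Sigma> \<mu> \<and> (\<exists>C. \<forall>E\<in>\<Sigma>. \<bar>\<mu> E\<bar> \<le> C)"

definition positive_measure :: "'a set set \<Rightarrow> ('a set \<Rightarrow> real) \<Rightarrow> bool" where
  "positive_measure \<Sigma> \<mu> \<longleftrightarrow> (\<forall>E\<in>\<Sigma>. 0 \<le> \<mu> E)"

definition count_additive :: "'a set set \<Rightarrow> ('a set \<Rightarrow> real) \<Rightarrow> bool" where
  "count_additive \<Sigma> \<mu> \<longleftrightarrow> (\<forall>F::nat \<Rightarrow> 'a set. range F \<subseteq> \<Sigma> \<longrightarrow> disjoint_family F \<longrightarrow>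
      (\<lambda>i. \<mu> (F i)) sums \<mu> (\<Union>i. F i))"

definition sigma_measurable_fun :: "'a set \<Rightarrow> 'a set set \<Rightarrow> ('a \<Rightarrow> real) \<Rightarrow> bool" where
  "sigma_measurable_fun X \<Sigma> f \<longleftrightarrow> (\<forall>t::real. {x\<in>X. f x \<le> t} \<in> \<Sigma>)"

definition transition_function :: "'a set \<Rightarrow> 'a set set \<Rightarrow> ('a \<Rightarrow> 'a set \<Rightarrow> real) \<Rightarrow> bool" where
  "transition_function X \<Sigma> p \<longleftrightarrow>
     (\<forall>x\<in>X. \<forall>E\<in>\<Sigma>. 0 \<le> p x E \<and> p x E \<le> 1) \<and>
     (\<forall>x\<in>X. p x X = 1) \<and>
     (\<forall>E\<in>\<Sigma>. sigma_measurable_fun X \<Sigma> (\<lambda>x. p x E)) \<and>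
     (\<forall>x\<in>X. count_additive \<Sigma> (\<lambda>E. if E \<in> \<Sigma> then p x E else 0))"

definition sigma_partitions :: "'a set \<Rightarrow> 'a set set \<Rightarrow> 'a set set set" where
  "sigma_partitions X \<Sigma> = {P. finite P \<and> P \<subseteq> \<Sigma> \<and> {} \<notin> P \<and> disjoint P \<and> \<Union>P = X}"

text \<open>Integral of a bounded Sigma-measurable function against a positive bounded finitely
  additive measure (lower Darboux sums over finite measurable partitions; for bounded measurable
  functions this coincides with the standard integral).\<close>
definition fa_integral :: "'a set \<Rightarrow> 'a set set \<Rightarrow> ('a set \<Rightarrow> real) \<Rightarrow> ('a \<Rightarrow> real) \<Rightarrow> real" where
  "fa_integral X \<Sigma> \<mu> f = Sup {(\<Sum>E\<in>P. Inf (f ` E) * \<mu> E) | P. P \<in> sigma_partitions X \<Sigma>}"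

text \<open>The Markov operator A (applied to positive measures, which is all that cycles need).\<close>
definition markov_op :: "'a set \<Rightarrow> 'a set set \<Rightarrow> ('a \<Rightarrow> 'a set \<Rightarrow> real) \<Rightarrow> ('a set \<Rightarrow> real) \<Rightarrow> ('a set \<Rightarrow> real)" where
  "markov_op X \<Sigma> p \<mu> = (\<lambda>E. if E \<in> \<Sigma> then fa_integral X \<Sigma> \<mu> (\<lambda>x. p x E) else 0)"

text \<open>A cycle of measures, given as a list [mu_1,...,mu_m] (index i in the list is mu_(i+1)).\<close>
definition measure_cycle :: "'a set \<Rightarrow> 'a set set \<Rightarrow> ('a \<Rightarrow> 'a set \<Rightarrow> real) \<Rightarrow> ('a set \<Rightarrow> real) list \<Rightarrow> bool" where
  "measure_cycle X \<Sigma> p \<mu>s \<longleftrightarrow> \<mu>s \<noteq> [] \<and> distinct \<mu>s \<and>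
     (\<forall>i<length \<mu>s. ba_measure X \<Sigma> (\<mu>s ! i) \<and> positive_measure \<Sigma> (\<mu>s ! i)) \<and>
     (\<forall>i<length \<mu>s. markov_op X \<Sigma> p (\<mu>s ! i) = \<mu>s ! (Suc i mod length \<mu>s))"

definition mean_measure :: "('a set \<Rightarrow> real) list \<Rightarrow> ('a set \<Rightarrow> real)" where
  "mean_measure \<mu>s = (\<lambda>E. (\<Sum>k<length \<mu>s. (\<mu>s ! k) E) / real (length \<mu>s))"

end

theory Submission
  imports Defs
begin

text \<open>The converse
  direction holds since countable additivity is preserved by finite sums and scaling.\<close>

lemma fin_additive_UN_split_first:
  fixes F :: "nat \<Rightarrow> 'a set"
  assumes sa: "sigma_algebra X \<Sigma>" and fa: "fin_additive \<Sigma> \<nu>"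
    and F: "range F \<subseteq> \<Sigma>" and dj: "disjoint_family F"
  shows "\<nu> (\<Union>i. F i) = \<nu> (F 0) + \<nu> (\<Union>i. F (Suc i))"
proof -
  interpret sigma_algebra X \<Sigma> by (fact sa)
  have "(\<Union>i. F i) = F 0 \<union> (\<Union>i. F (Suc i))"
  proof (intro equalityI subsetI)
    fix x assume "x \<in> (\<Union>i. F i)"
    then obtain i where "x \<in> F i" by blast
    then show "x \<in> F 0 \<union> (\<Union>i. F (Suc i))" by (cases i) auto
  qed auto
  moreover have "F 0 \<inter> (\<Union>i. F (Suc i)) = {}"
    using dj by (auto simp: disjoint_family_on_def)
  moreover have "F 0 \<in> \<Sigma>" and "(\<Union>i. F (Suc i)) \<in> \<Sigma>"
    using F by auto
  ultimately show ?thesis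
    using fa unfolding fin_additive_def by metis
qed

lemma fin_additive_UN_split_tail:
  fixes F :: "nat \<Rightarrow> 'a set"
  assumes sa: "sigma_algebra X \<Sigma>" and fa: "fin_additive \<Sigma> \<nu>"
    and F: "range F \<subseteq> \<Sigma>" and dj: "disjoint_family F"
  shows "\<nu> (\<Union>i. F i) = (\<Sum>i<n. \<nu> (F i)) + \<nu> (\<Union>i. F (i + n))"
proof (induction n)
  case (Suc n)
  have "range (\<lambda>i. F (i + n)) \<subseteq> \<Sigma>" and "disjoint_family (\<lambda>i. F (i + n))"
    using F dj by (auto simp: disjoint_family_on_def)
  then have "\<nu> (\<Union>i. F (i + n)) = \<nu> (F n) + \<nu> (\<Union>i. F (i + Suc n))"
    using fin_additive_UN_split_first[OF sa fa] by simp
  with Suc show ?case by simp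
qed simp

lemma count_additive_tail_tendsto_zero:
  fixes F :: "nat \<Rightarrow> 'a set"
  assumes ca: "count_additive \<Sigma> \<rho>" and F: "range F \<subseteq> \<Sigma>" and dj: "disjoint_family F"
  shows "(\<lambda>n. \<rho> (\<Union>i. F (i + n))) \<longlonglongrightarrow> 0"
proof -
  have "(\<lambda>i. \<rho> (F (i + n))) sums \<rho> (\<Union>i. F (i + n))" for n
  proof -
    have "range (\<lambda>i. F (i + n)) \<subseteq> \<Sigma>" and "disjoint_family (\<lambda>i. F (i + n))"
      using F dj by (auto simp: disjoint_family_on_def)
    then show ?thesis
      using ca unfolding count_additive_def by blast
  qed
  then have "\<rho> (\<Union>i. F (i + n)) = (\<Sum>i. \<rho> (F (i + n)))" for n
    by (simp add: sums_iff)
  moreover have "summable (\<lambda>i. \<rho> (F i))"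
    using ca F dj unfolding count_additive_def by (blast intro: sums_summable)
  ultimately show ?thesis
    using suminf_exist_split2 by simp
qed

lemma count_additive_if_tail_tendsto_zero:
  assumes sa: "sigma_algebra X \<Sigma>" and fa: "fin_additive \<Sigma> \<nu>"
    and tail: "\<And>F. range F \<subseteq> \<Sigma> \<Longrightarrow> disjoint_family F \<Longrightarrow> (\<lambda>n. \<nu> (\<Union>i. F (i + n))) \<longlonglongrightarrow> 0"
  shows "count_additive \<Sigma> \<nu>"
  unfolding count_additive_def
proof (intro allI impI)
  fix F :: "nat \<Rightarrow> _" assume F: "range F \<subseteq> \<Sigma>" and dj: "disjoint_family F"
  have "(\<Sum>i<n. \<nu> (F i)) = \<nu> (\<Union>i. F i) - \<nu> (\<Union>i. F (i + n))" for n
    using fin_additive_UN_split_tail[OF sa fa F dj, of n] by simp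
  moreover have "(\<lambda>n. \<nu> (\<Union>i. F i) - \<nu> (\<Union>i. F (i + n))) \<longlonglongrightarrow> \<nu> (\<Union>i. F i) - 0"
    using tail[OF F dj] by (intro tendsto_intros)
  ultimately show "(\<lambda>i. \<nu> (F i)) sums \<nu> (\<Union>i. F i)"
    unfolding sums_def by simp
qed

lemma count_additive_dominated:
  assumes sa: "sigma_algebra X \<Sigma>" and fa: "fin_additive \<Sigma> \<nu>" and pos: "positive_measure \<Sigma> \<nu>"
    and ca: "count_additive \<Sigma> \<rho>" and dom: "\<forall>E\<in>\<Sigma>. \<nu> E \<le> c * \<rho> E"
  shows "count_additive \<Sigma> \<nu>"
proof (rule count_additive_if_tail_tendsto_zero[OF sa fa])
  fix F :: "nat \<Rightarrow> _" assume F: "range F \<subseteq> \<Sigma>" and dj: "disjoint_family F"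
  have tail: "(\<Union>i. F (i + n)) \<in> \<Sigma>" for n
    using sa F by (auto intro!: sigma_algebra.countable_UN)
  have upper: "(\<lambda>n. c * \<rho> (\<Union>i. F (i + n))) \<longlonglongrightarrow> 0"
    using count_additive_tail_tendsto_zero[OF ca F dj] by (rule tendsto_mult_right_zero)
  show "(\<lambda>n. \<nu> (\<Union>i. F (i + n))) \<longlonglongrightarrow> 0"
    using pos dom tail unfolding positive_measure_def
    by (intro tendsto_sandwich[OF _ _ tendsto_const upper] always_eventually allI) auto
qed

lemma count_additive_sum:
  assumes "\<And>k. k \<in> I \<Longrightarrow> count_additive \<Sigma> (\<mu> k)"
  shows "count_additive \<Sigma> (\<lambda>E. \<Sum>k\<in>I. \<mu> k E)"
  using assms unfolding count_additive_def by (auto intro!: sums_sum)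

lemma count_additive_divide:
  assumes "count_additive \<Sigma> \<mu>"
  shows "count_additive \<Sigma> (\<lambda>E. \<mu> E / c)"
  using assms unfolding count_additive_def by (auto intro: sums_divide)

lemma nth_le_length_mult_mean_measure:
  assumes pos: "\<forall>k<length \<mu>s. positive_measure \<Sigma> (\<mu>s ! k)"
    and i: "i < length \<mu>s" and E: "E \<in> \<Sigma>"
  shows "(\<mu>s ! i) E \<le> real (length \<mu>s) * mean_measure \<mu>s E"
proof -
  have "(\<mu>s ! i) E \<le> (\<Sum>k<length \<mu>s. (\<mu>s ! k) E)"
    using pos i E unfolding positive_measure_def by (intro member_le_sum) auto
  also have "\<dots> = real (length \<mu>s) * mean_measure \<mu>s E"
    using i unfolding mean_measure_def by simp
  finally show ?thesis .
qed

lemma count_additive_mean_measure_iff: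
  assumes sa: "sigma_algebra X \<Sigma>"
    and fa: "\<forall>k<length \<mu>s. fin_additive \<Sigma> (\<mu>s ! k)"
    and pos: "\<forall>k<length \<mu>s. positive_measure \<Sigma> (\<mu>s ! k)"
  shows "(\<forall>i<length \<mu>s. count_additive \<Sigma> (\<mu>s ! i)) \<longleftrightarrow> count_additive \<Sigma> (mean_measure \<mu>s)"
proof
  assume "\<forall>i<length \<mu>s. count_additive \<Sigma> (\<mu>s ! i)"
  then show "count_additive \<Sigma> (mean_measure \<mu>s)"
    unfolding mean_measure_def by (intro count_additive_divide count_additive_sum) simp
next
  assume "count_additive \<Sigma> (mean_measure \<mu>s)"
  then show "\<forall>i<length \<mu>s. count_additive \<Sigma> (\<mu>s ! i)"
    using fa pos nth_le_length_mult_mean_measure[OF pos]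
    by (blast intro: count_additive_dominated[OF sa])
qed

theorem corollary4p1:
  fixes X :: "'a set" and \<Sigma> :: "'a set set" and p :: "'a \<Rightarrow> 'a set \<Rightarrow> real"
    and \<mu>s :: "('a set \<Rightarrow> real) list"
  assumes "standing_space X \<Sigma>"
    and "transition_function X \<Sigma> p"
    and "measure_cycle X \<Sigma> p \<mu>s"
  shows "(\<forall>i<length \<mu>s. count_additive \<Sigma> (\<mu>s ! i)) \<longleftrightarrow> count_additive \<Sigma> (mean_measure \<mu>s)"
proof (rule count_additive_mean_measure_iff)
  show "sigma_algebra X \<Sigma>"
    using assms(1) unfolding standing_space_def by blast
  show "\<forall>k<length \<mu>s. fin_additive \<Sigma> (\<mu>s ! k)"
    and "\<forall>k<length \<mu>s. positive_measure \<Sigma> (\<mu>s ! k)"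
    using assms(3) unfolding measure_cycle_def ba_measure_def by auto
qed

end
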